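(* Let $A$ be a circular $m\times n$ matrix, $b\in\mathbb{Z}_+^m$, $x^*\in Q(A,b)\setminus Q^*(A,b)$, and let $\Gamma$ be a circuit with negative cost in $D(A,x^* )$. Then $p(\Gamma)>0$.
   Context: Notation: $[n]=\{1,\dots,n\}$ with addition mod $n$ (index $0$ identified with $n$); for $a,c\in[n]$ with $t\ge0$ minimal such that $a+t\equiv c\pmod n$, $[a,c)_n=\{a,\dots,a+t-1\}$ (mod $n$). An $m\times n$ $\{0,1\}$-matrix $A$ is circular if for each row $i$ there are $\ell_i\in[n]$ and an integer $2\le k_i\le n-1$ with row $i$ the incidence vector of $[\ell_i,\ell_i+k_i)_n$. $Q(A,b)=\{x\ge0:Ax\ge b\}$, $Q^*(A,b)=\operatorname{conv}(Q(A,b)\cap\mathbb{Z}^n)$. $D(A)$: node set $[n]$ (labels mod $n$); forward arcs $a_i=(\ell_i-1,\ell_i+k_i-1)$ ($i\in[m]$, length $k_i$), $a_{m+j}=(j-1,j)$ ($j\in[n]$, length $1$); reverse arcs $\bar a_i=(\ell_i+k_i-1,\ell_i-1)$ (length $-k_i$), $\bar a_{m+j}=(j,j-1)$ (length $-1$). A circuit is a simple directed circuit; winding number $p(\Gamma)$: $p(\Gamma)n=\sum_{a\in E(\Gamma)}l(a)$. Costs: $\tilde A=\binom{A}{I}$, $d=\binom{b}{0}$, $v$ = last column of $\tilde A$; for $x^*\in Q(A,b)$: $s^*=\tilde Ax^*-d$, $\mu=\lceil\mathbf{1}^Tx^*\rceil-\mathbf{1}^Tx^*$, $c^+(x^* )=\mu(s^*-(1-\mu)v)$,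 $c^-(x^* )=(1-\mu)(s^*+\mu v)$. In $D(A,x^* )$ arc $a_k$ ($k\in[m+n]$) has cost $c^+_k(x^* )$ and $\bar a_k$ has cost $c^-_k(x^* )$; the cost of a circuit is the sum of its arc costs. *)

theory Defs
  imports Complex_Main
begin

text \<open>Columns and rows are 1-indexed: columns j in {1..n}, rows i in {1..m}.
  Nodes of D(A) are labels mod n, represented by {0..<n} (label n is node 0).\<close>

definition cint :: "nat \<Rightarrow> nat \<Rightarrow> nat \<Rightarrow> nat set" where
  "cint n a t = {((a - 1 + s) mod n) + 1 | s. s < t}"

definition circular_with ::
  "nat \<Rightarrow> nat \<Rightarrow> (nat \<Rightarrow> nat \<Rightarrow> real) \<Rightarrow> (nat \<Rightarrow> nat) \<Rightarrow> (nat \<Rightarrow> nat) \<Rightarrow> bool" where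
  "circular_with m n A l k \<longleftrightarrow>
     (\<forall>i\<in>{1..m}. l i \<in> {1..n} \<and> 2 \<le> k i \<and> k i \<le> n - 1 \<and>
        (\<forall>j\<in>{1..n}. A i j = (if j \<in> cint n (l i) (k i) then 1 else 0)))"

definition inQ :: "nat \<Rightarrow> nat \<Rightarrow> (nat \<Rightarrow> nat \<Rightarrow> real) \<Rightarrow> (nat \<Rightarrow> int) \<Rightarrow> (nat \<Rightarrow> real) \<Rightarrow> bool" where
  "inQ m n A b x \<longleftrightarrow> (\<forall>j\<in>{1..n}. 0 \<le> x j) \<and>
     (\<forall>i\<in>{1..m}. (\<Sum>j=1..n. A i j * x j) \<ge> of_int (b i))"

definition inQstar :: "nat \<Rightarrow> nat \<Rightarrow> (nat \<Rightarrow> nat \<Rightarrow> real) \<Rightarrow> (nat \<Rightarrow> int) \<Rightarrow> (nat \<Rightarrow> real) \<Rightarrow> bool" where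
  "inQstar m n A b x \<longleftrightarrow>
     (\<exists>S u. finite S \<and> S \<noteq> {} \<and>
        (\<forall>y\<in>S. inQ m n A b y \<and> (\<forall>j\<in>{1..n}. y j \<in> \<int>)) \<and>
        (\<forall>y\<in>S. 0 \<le> u y) \<and> (\<Sum>y\<in>S. u y) = 1 \<and>
        (\<forall>j\<in>{1..n}. x j = (\<Sum>y\<in>S. u y * y j)))"

text \<open>Arcs of D(A): (q, True) is the forward arc a_q, (q, False) the reverse arc \<bar>a_q, q in {1..m+n}.\<close>
type_synonym arc = "nat \<times> bool"

definition valid_arc :: "nat \<Rightarrow> nat \<Rightarrow> arc \<Rightarrow> bool" where
  "valid_arc m n e \<longleftrightarrow> fst e \<in> {1..m+n}"

definition fwd_tail :: "nat \<Rightarrow> nat \<Rightarrow> (nat \<Rightarrow> nat) \<Rightarrow> (nat \<Rightarrow> nat) \<Rightarrow> nat \<Rightarrow> nat" where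
  "fwd_tail m n l k q = (if q \<le> m then (l q - 1) mod n else (q - m - 1) mod n)"

definition fwd_head :: "nat \<Rightarrow> nat \<Rightarrow> (nat \<Rightarrow> nat) \<Rightarrow> (nat \<Rightarrow> nat) \<Rightarrow> nat \<Rightarrow> nat" where
  "fwd_head m n l k q = (if q \<le> m then (l q + k q - 1) mod n else (q - m) mod n)"

definition arc_tail :: "nat \<Rightarrow> nat \<Rightarrow> (nat \<Rightarrow> nat) \<Rightarrow> (nat \<Rightarrow> nat) \<Rightarrow> arc \<Rightarrow> nat" where
  "arc_tail m n l k e = (if snd e then fwd_tail m n l k (fst e) else fwd_head m n l k (fst e))"

definition arc_head :: "nat \<Rightarrow> nat \<Rightarrow> (nat \<Rightarrow> nat) \<Rightarrow> (nat \<Rightarrow> nat) \<Rightarrow> arc \<Rightarrow> nat" where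
  "arc_head m n l k e = (if snd e then fwd_head m n l k (fst e) else fwd_tail m n l k (fst e))"

definition arc_len :: "nat \<Rightarrow> (nat \<Rightarrow> nat) \<Rightarrow> arc \<Rightarrow> int" where
  "arc_len m k e = (let L = (if fst e \<le> m then int (k (fst e)) else 1) in if snd e then L else - L)"

definition is_circuit :: "nat \<Rightarrow> nat \<Rightarrow> (nat \<Rightarrow> nat) \<Rightarrow> (nat \<Rightarrow> nat) \<Rightarrow> arc list \<Rightarrow> bool" where
  "is_circuit m n l k C \<longleftrightarrow> C \<noteq> [] \<and> (\<forall>e\<in>set C. valid_arc m n e) \<and>
     distinct (map (arc_tail m n l k) C) \<and>
     (\<forall>i<length C. arc_head m n l k (C ! i) = arc_tail m n l k (C ! ((i + 1) mod length C)))"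

definition winding :: "nat \<Rightarrow> nat \<Rightarrow> (nat \<Rightarrow> nat) \<Rightarrow> arc list \<Rightarrow> real" where
  "winding m n k C = real_of_int (\<Sum>e\<leftarrow>C. arc_len m k e) / real n"

text \<open>Data of the stacked system  (A;I) x >= (b;0), indices q in {1..m+n}.\<close>
definition vvec :: "nat \<Rightarrow> nat \<Rightarrow> (nat \<Rightarrow> nat \<Rightarrow> real) \<Rightarrow> nat \<Rightarrow> real" where
  "vvec m n A q = (if q \<le> m then A q n else if q - m = n then 1 else 0)"

definition slack :: "nat \<Rightarrow> nat \<Rightarrow> (nat \<Rightarrow> nat \<Rightarrow> real) \<Rightarrow> (nat \<Rightarrow> int) \<Rightarrow> (nat \<Rightarrow> real) \<Rightarrow> nat \<Rightarrow> real" where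
  "slack m n A b x q = (if q \<le> m then (\<Sum>j=1..n. A q j * x j) - of_int (b q) else x (q - m))"

definition mu :: "nat \<Rightarrow> (nat \<Rightarrow> real) \<Rightarrow> real" where
  "mu n x = of_int \<lceil>\<Sum>j=1..n. x j\<rceil> - (\<Sum>j=1..n. x j)"

definition cplus :: "nat \<Rightarrow> nat \<Rightarrow> (nat \<Rightarrow> nat \<Rightarrow> real) \<Rightarrow> (nat \<Rightarrow> int) \<Rightarrow> (nat \<Rightarrow> real) \<Rightarrow> nat \<Rightarrow> real" where
  "cplus m n A b x q = mu n x * (slack m n A b x q - (1 - mu n x) * vvec m n A q)"

definition cminus :: "nat \<Rightarrow> nat \<Rightarrow> (nat \<Rightarrow> nat \<Rightarrow> real) \<Rightarrow> (nat \<Rightarrow> int) \<Rightarrow> (nat \<Rightarrow> real) \<Rightarrow> nat \<Rightarrow> real" where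
  "cminus m n A b x q = (1 - mu n x) * (slack m n A b x q + mu n x * vvec m n A q)"

definition arc_cost :: "nat \<Rightarrow> nat \<Rightarrow> (nat \<Rightarrow> nat \<Rightarrow> real) \<Rightarrow> (nat \<Rightarrow> int) \<Rightarrow> (nat \<Rightarrow> real) \<Rightarrow> arc \<Rightarrow> real" where
  "arc_cost m n A b x e = (if snd e then cplus m n A b x (fst e) else cminus m n A b x (fst e))"

definition circuit_cost :: "nat \<Rightarrow> nat \<Rightarrow> (nat \<Rightarrow> nat \<Rightarrow> real) \<Rightarrow> (nat \<Rightarrow> int) \<Rightarrow> (nat \<Rightarrow> real) \<Rightarrow> arc list \<Rightarrow> real" where
  "circuit_cost m n A b x C = (\<Sum>e\<leftarrow>C. arc_cost m n A b x e)"

end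

theory Submission
  imports Defs
begin

text \<open>Write every arc length as the head label minus the tail label plus n times a wrap count
  w(e) \<in> {-1,0,1}, which records whether the arc passes from node n-1 over node 0.
  Along a circuit the label differences telescope, so p(\<Gamma>) is the sum of the w(e).
  The wrap count of a_q is exactly the last entry v_q of column n, and the slacks are
  nonnegative, so every arc costs at least -\<mu>(1-\<mu>) w(e); summing, the cost of \<Gamma> is at least
  -\<mu>(1-\<mu>) p(\<Gamma>) with 0 \<le> \<mu> < 1. Hence a negative cost forces p(\<Gamma>) > 0.\<close>

definition wrap :: "nat \<Rightarrow> nat \<Rightarrow> (nat \<Rightarrow> nat) \<Rightarrow> (nat \<Rightarrow> nat) \<Rightarrow> nat \<Rightarrow> int" where
  "wrap m n l k q =
     (if q \<le> m then (if n \<le> l q + k q - 1 then 1 else 0) else if q - m = n then 1 else 0)"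

definition arc_wrap :: "nat \<Rightarrow> nat \<Rightarrow> (nat \<Rightarrow> nat) \<Rightarrow> (nat \<Rightarrow> nat) \<Rightarrow> arc \<Rightarrow> int" where
  "arc_wrap m n l k e = (if snd e then wrap m n l k (fst e) else - wrap m n l k (fst e))"

lemma last_mem_cint_iff:
  assumes "a \<in> {1..n}" "t \<le> n - 1"
  shows "n \<in> cint n a t \<longleftrightarrow> n \<le> a + t - 1"
proof
  assume "n \<in> cint n a t"
  then obtain s where s: "s < t" "n = (a - 1 + s) mod n + 1" unfolding cint_def by auto
  show "n \<le> a + t - 1"
  proof (rule ccontr)
    assume "\<not> n \<le> a + t - 1"
    then have "(a - 1 + s) mod n = a - 1 + s" using s assms by auto
    with s \<open>\<not> n \<le> a + t - 1\<close> assms show False by auto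
  qed
next
  assume "n \<le> a + t - 1"
  then have "n - a < t" "n = (a - 1 + (n - a)) mod n + 1" using assms by auto
  then show "n \<in> cint n a t" unfolding cint_def by blast
qed

lemma vvec_eq_wrap:
  assumes "circular_with m n A l k" "q \<in> {1..m+n}"
  shows "vvec m n A q = of_int (wrap m n l k q)"
proof (cases "q \<le> m")
  case True
  then have "l q \<in> {1..n}" "k q \<le> n - 1"
    and row: "\<forall>j\<in>{1..n}. A q j = (if j \<in> cint n (l q) (k q) then 1 else 0)"
    using assms unfolding circular_with_def by auto
  then have "A q n = (if n \<in> cint n (l q) (k q) then 1 else 0)" by auto
  with last_mem_cint_iff[OF \<open>l q \<in> {1..n}\<close> \<open>k q \<le> n - 1\<close>] True show ?thesis
    unfolding vvec_def wrap_def by auto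
qed (auto simp: vvec_def wrap_def)

lemma fwd_length_eq:
  assumes "circular_with m n A l k" "q \<in> {1..m+n}"
  shows "(if q \<le> m then int (k q) else 1) =
    int (fwd_head m n l k q) - int (fwd_tail m n l k q) + int n * wrap m n l k q"
proof (cases "q \<le> m")
  case True
  then have "l q \<in> {1..n}" "k q \<le> n - 1"
    using assms unfolding circular_with_def by auto
  moreover have "(l q + k q - 1) mod n = l q + k q - 1 - n" if "n \<le> l q + k q - 1"
  proof -
    have "l q + k q - 1 - n < n" using that \<open>l q \<in> {1..n}\<close> \<open>k q \<le> n - 1\<close> by auto
    with that show ?thesis by (metis le_mod_geq mod_less)
  qed
  ultimately show ?thesis
    using True unfolding fwd_head_def fwd_tail_def wrap_def by auto
next
  case False
  then show ?thesis using assms(2) unfolding fwd_head_def fwd_tail_def wrap_def by auto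
qed

lemma arc_len_eq:
  assumes "circular_with m n A l k" "valid_arc m n e"
  shows "arc_len m k e =
    int (arc_head m n l k e) - int (arc_tail m n l k e) + int n * arc_wrap m n l k e"
  using fwd_length_eq[OF assms(1), of "fst e"] assms(2)
  unfolding arc_len_def arc_head_def arc_tail_def arc_wrap_def valid_arc_def Let_def
  by (auto simp: algebra_simps)

lemma sum_list_rotate1: "sum_list (rotate1 xs) = (sum_list xs :: 'a :: comm_monoid_add)"
  by (cases xs) (simp_all add: add.commute)

lemma sum_list_cyclic_diff_eq_0:
  fixes h t :: "'a \<Rightarrow> 'b :: ab_group_add"
  assumes "\<forall>i<length C. h (C ! i) = t (C ! ((i + 1) mod length C))"
  shows "(\<Sum>e\<leftarrow>C. h e - t e) = 0"
proof -
  have "map h C = map t (rotate1 C)"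
    using assms by (intro nth_equalityI) (simp_all add: nth_rotate1)
  then have "sum_list (map h C) = sum_list (map t C)"
    by (metis rotate1_map sum_list_rotate1)
  then show ?thesis by (simp add: sum_list_subtractf)
qed

lemma winding_eq_sum_arc_wrap:
  assumes "circular_with m n A l k" "is_circuit m n l k C"
  shows "winding m n k C = of_int (\<Sum>e\<leftarrow>C. arc_wrap m n l k e)"
proof -
  have arcs: "\<forall>e\<in>set C. valid_arc m n e" and "C \<noteq> []"
    using assms(2) unfolding is_circuit_def by auto
  then obtain e where "fst e \<in> {1..m+n}" unfolding valid_arc_def by (cases C) auto
  then have "n > 0"
    using assms(1) unfolding circular_with_def by (cases "fst e \<le> m") fastforce+
  have "(\<Sum>e\<leftarrow>C. arc_len m k e) =
      (\<Sum>e\<leftarrow>C. int (arc_head m n l k e) - int (arc_tail m n l k e))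
      + int n * (\<Sum>e\<leftarrow>C. arc_wrap m n l k e)"
    using arc_len_eq[OF assms(1)] arcs
    by (simp add: sum_list_addf sum_list_const_mult cong: map_cong)
  also have "(\<Sum>e\<leftarrow>C. int (arc_head m n l k e) - int (arc_tail m n l k e)) = 0"
    using assms(2) unfolding is_circuit_def by (intro sum_list_cyclic_diff_eq_0) auto
  finally show ?thesis using \<open>n > 0\<close> unfolding winding_def by simp
qed

lemma mu_bounds: "0 \<le> mu n x" "mu n x < 1"
  unfolding mu_def by (simp_all add: ceiling_correct) linarith

lemma slack_nonneg:
  assumes "inQ m n A b x" "q \<in> {1..m+n}"
  shows "0 \<le> slack m n A b x q"
proof (cases "q \<le> m")
  case False
  then have "q - m \<in> {1..n}" using assms(2) by auto
  with False show ?thesis using assms(1) unfolding inQ_def slack_def by auto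
qed (use assms in \<open>auto simp: inQ_def slack_def\<close>)

lemma arc_cost_ge:
  assumes "circular_with m n A l k" "inQ m n A b x" "valid_arc m n e"
  shows "- (mu n x * (1 - mu n x)) * of_int (arc_wrap m n l k e) \<le> arc_cost m n A b x e"
proof -
  have q: "fst e \<in> {1..m+n}" using assms(3) unfolding valid_arc_def by auto
  have "0 \<le> mu n x * slack m n A b x (fst e)" "0 \<le> (1 - mu n x) * slack m n A b x (fst e)"
    using mu_bounds[of n x] slack_nonneg[OF assms(2) q] by simp_all
  then show ?thesis
    using vvec_eq_wrap[OF assms(1) q]
    unfolding arc_cost_def cplus_def cminus_def arc_wrap_def by (simp add: algebra_simps)
qed

lemma circuit_cost_ge:
  assumes "circular_with m n A l k" "inQ m n A b x" "\<forall>e\<in>set C. valid_arc m n e"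
  shows "- (mu n x * (1 - mu n x)) * of_int (\<Sum>e\<leftarrow>C. arc_wrap m n l k e)
    \<le> circuit_cost m n A b x C"
proof -
  have "- (mu n x * (1 - mu n x)) * of_int (\<Sum>e\<leftarrow>C. arc_wrap m n l k e) =
      (\<Sum>e\<leftarrow>C. - (mu n x * (1 - mu n x)) * of_int (arc_wrap m n l k e))"
    by (induction C) (simp_all add: algebra_simps)
  also have "\<dots> \<le> circuit_cost m n A b x C"
    unfolding circuit_cost_def using arc_cost_ge[OF assms(1,2)] assms(3)
    by (intro sum_list_mono) auto
  finally show ?thesis .
qed

theorem lemma4p3:
  fixes m n :: nat and A :: "nat \<Rightarrow> nat \<Rightarrow> real" and l k :: "nat \<Rightarrow> nat"
    and b :: "nat \<Rightarrow> int" and x :: "nat \<Rightarrow> real" and C :: "arc list"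
  assumes "circular_with m n A l k"
    and "\<forall>i\<in>{1..m}. 0 \<le> b i"
    and "inQ m n A b x" and "\<not> inQstar m n A b x"
    and "is_circuit m n l k C"
    and "circuit_cost m n A b x C < 0"
  shows "winding m n k C > 0"
proof -
  let ?W = "\<Sum>e\<leftarrow>C. arc_wrap m n l k e"
  have "- (mu n x * (1 - mu n x)) * of_int ?W < 0"
    using circuit_cost_ge[OF assms(1,3)] assms(5,6) unfolding is_circuit_def by fastforce
  moreover have "0 \<le> mu n x * (1 - mu n x)" using mu_bounds[of n x] by simp
  ultimately have "0 < ?W" using mult_nonneg_nonpos[of _ "of_int ?W"] by fastforce
  then show ?thesis using winding_eq_sum_arc_wrap[OF assms(1,5)] by simp
qed

end
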